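(* If $\widetilde{\sigma}_{AB},\widetilde{\sigma}'_{AB}\in\widetilde{S}_{AB}$ have a common upper bound, their supremum exists in $\widetilde{S}_{AB}$ and $$\widetilde{\sigma}_{AB}\sqcup_{\widetilde{S}_{AB}}\widetilde{\sigma}'_{AB}=\inf^{\widetilde{S}_{AB}}\big(\underline{\widetilde{\sigma}_{AB}}\cap\underline{\widetilde{\sigma}'_{AB}}\big),$$ where for $\sigma\in\widetilde{S}_{AB}$, $\underline{\sigma}$ denotes the set of pure states of $\widetilde{S}_{AB}$ (elements $\sigma_A\widetilde{\otimes}\sigma_B$ with $\sigma_A,\sigma_B$ pure) lying above $\sigma$.
   Context: $(\mathfrak{S}_A,\mathfrak{E}_A,\epsilon^{\mathfrak{S}_A})$, $(\mathfrak{S}_B,\mathfrak{E}_B,\epsilon^{\mathfrak{S}_B})$ are States/Effects Chu spaces valued in $\mathfrak{B}=\{\mathbf{Y},\mathbf{N},\bot\}$ (meet $\wedge$, product $\bullet$: $x\bullet\mathbf{Y}=x$, $x\bullet\mathbf{N}=\mathbf{N}$, $\bot\bullet\bot=\bot$), whose spaces of states admit a description in terms of pure states (completely meet-irreducible elements = maximal elements, generating every state as infimum). The minimal tensor product $\widetilde{S}_{AB}$ consists of the maps $\inf^{\widetilde{S}_{AB}}_{i\in I}\sigma_{i,A}\widetilde{\otimes}\sigma_{i,B}:(\mathfrak{l}_A,\mathfrak{l}_B)\mapsto\bigwedge_{i\in I}\epsilon^{\mathfrak{S}_A}_{\mathfrak{l}_A}(\sigma_{i,A})\bullet\epsilon^{\mathfrak{S}_B}_{\mathfrak{l}_B}(\sigma_{i,B})$,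 ordered pointwise; every element of $\widetilde{S}_{AB}$ is the infimum of the pure tensors of pure states above it. *)

theory Defs
  imports Main
begin

datatype B3 = Y | N | Bot

definition ble :: "B3 \<Rightarrow> B3 \<Rightarrow> bool" where
  "ble x y \<longleftrightarrow> x = Bot \<or> x = y"

text \<open>Meet of a (nonempty) set of values in B.\<close>
definition bInf :: "B3 set \<Rightarrow> B3" where
  "bInf X = (if X = {Y} then Y else if X = {N} then N else Bot)"

fun bprod :: "B3 \<Rightarrow> B3 \<Rightarrow> B3" where
  "bprod x Y = x"
| "bprod x N = N"
| "bprod Y Bot = Bot"
| "bprod N Bot = N"
| "bprod Bot Bot = Bot"

definition is_inf :: "('s \<Rightarrow> 's \<Rightarrow> bool) \<Rightarrow> 's set \<Rightarrow> 's set \<Rightarrow> 's \<Rightarrow> bool" where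
  "is_inf le S X s \<longleftrightarrow> s \<in> S \<and> (\<forall>x\<in>X. le s x) \<and> (\<forall>t\<in>S. (\<forall>x\<in>X. le t x) \<longrightarrow> le t s)"

definition is_sup :: "('s \<Rightarrow> 's \<Rightarrow> bool) \<Rightarrow> 's set \<Rightarrow> 's set \<Rightarrow> 's \<Rightarrow> bool" where
  "is_sup le S X s \<longleftrightarrow> s \<in> S \<and> (\<forall>x\<in>X. le x s) \<and> (\<forall>t\<in>S. (\<forall>x\<in>X. le x t) \<longrightarrow> le s t)"

definition maximal_elems :: "('s \<Rightarrow> 's \<Rightarrow> bool) \<Rightarrow> 's set \<Rightarrow> 's set" where
  "maximal_elems le S = {p \<in> S. \<forall>s\<in>S. le p s \<longrightarrow> s = p}"

definition cmi_elems :: "('s \<Rightarrow> 's \<Rightarrow> bool) \<Rightarrow> 's set \<Rightarrow> 's set" where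
  "cmi_elems le S = {p \<in> S. \<forall>X\<subseteq>S. is_inf le S X p \<longrightarrow> p \<in> X}"

text \<open>A States/Effects Chu space: states S (a poset in which every nonempty family
has an infimum), effects E, evaluation ev l s = epsilon_l(s), where each
epsilon_l sends infima of states to meets in B.\<close>
definition SE_chu :: "'s set \<Rightarrow> 'e set \<Rightarrow> ('e \<Rightarrow> 's \<Rightarrow> B3) \<Rightarrow> ('s \<Rightarrow> 's \<Rightarrow> bool) \<Rightarrow> bool" where
  "SE_chu S E ev le \<longleftrightarrow>
     (\<forall>s\<in>S. le s s) \<and>
     (\<forall>s\<in>S. \<forall>t\<in>S. le s t \<longrightarrow> le t s \<longrightarrow> s = t) \<and>
     (\<forall>r\<in>S. \<forall>s\<in>S. \<forall>t\<in>S. le r s \<longrightarrow> le s t \<longrightarrow> le r t) \<and>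
     (\<forall>X. X \<subseteq> S \<longrightarrow> X \<noteq> {} \<longrightarrow> (\<exists>s. is_inf le S X s)) \<and>
     (\<forall>X s. X \<subseteq> S \<longrightarrow> X \<noteq> {} \<longrightarrow> is_inf le S X s \<longrightarrow>
        (\<forall>l\<in>E. ev l s = bInf (ev l ` X)))"

definition pure_states :: "('s \<Rightarrow> 's \<Rightarrow> bool) \<Rightarrow> 's set \<Rightarrow> 's set" where
  "pure_states le S = cmi_elems le S"

definition pure_description :: "'s set \<Rightarrow> ('s \<Rightarrow> 's \<Rightarrow> bool) \<Rightarrow> bool" where
  "pure_description S le \<longleftrightarrow>
     cmi_elems le S = maximal_elems le S \<and>
     (\<forall>s\<in>S. is_inf le S {p \<in> pure_states le S. le s p} s)"

text \<open>inf_{(a,b) in F} a \<otimes> b, as a map on effect pairs (extended by Bot outside EA \<times> EB).\<close>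
definition tinf :: "'ea set \<Rightarrow> 'eb set \<Rightarrow> ('ea \<Rightarrow> 'sa \<Rightarrow> B3) \<Rightarrow> ('eb \<Rightarrow> 'sb \<Rightarrow> B3)
    \<Rightarrow> ('sa \<times> 'sb) set \<Rightarrow> ('ea \<times> 'eb \<Rightarrow> B3)" where
  "tinf EA EB evA evB F = (\<lambda>(la, lb). if la \<in> EA \<and> lb \<in> EB
      then bInf ((\<lambda>(a, b). bprod (evA la a) (evB lb b)) ` F) else Bot)"

definition ptensor :: "'ea set \<Rightarrow> 'eb set \<Rightarrow> ('ea \<Rightarrow> 'sa \<Rightarrow> B3) \<Rightarrow> ('eb \<Rightarrow> 'sb \<Rightarrow> B3)
    \<Rightarrow> 'sa \<Rightarrow> 'sb \<Rightarrow> ('ea \<times> 'eb \<Rightarrow> B3)" where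
  "ptensor EA EB evA evB a b = tinf EA EB evA evB {(a, b)}"

definition min_tensor :: "'sa set \<Rightarrow> 'ea set \<Rightarrow> ('ea \<Rightarrow> 'sa \<Rightarrow> B3) \<Rightarrow>
    'sb set \<Rightarrow> 'eb set \<Rightarrow> ('eb \<Rightarrow> 'sb \<Rightarrow> B3) \<Rightarrow> ('ea \<times> 'eb \<Rightarrow> B3) set" where
  "min_tensor SA EA evA SB EB evB =
     {tinf EA EB evA evB F | F. F \<subseteq> SA \<times> SB \<and> F \<noteq> {}}"

definition tle :: "'ea set \<Rightarrow> 'eb set \<Rightarrow> ('ea \<times> 'eb \<Rightarrow> B3) \<Rightarrow> ('ea \<times> 'eb \<Rightarrow> B3) \<Rightarrow> bool" where
  "tle EA EB f g \<longleftrightarrow> (\<forall>l \<in> EA \<times> EB. ble (f l) (g l))"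

definition pure_tensors :: "'sa set \<Rightarrow> 'ea set \<Rightarrow> ('ea \<Rightarrow> 'sa \<Rightarrow> B3) \<Rightarrow> ('sa \<Rightarrow> 'sa \<Rightarrow> bool) \<Rightarrow>
    'sb set \<Rightarrow> 'eb set \<Rightarrow> ('eb \<Rightarrow> 'sb \<Rightarrow> B3) \<Rightarrow> ('sb \<Rightarrow> 'sb \<Rightarrow> bool) \<Rightarrow> ('ea \<times> 'eb \<Rightarrow> B3) set" where
  "pure_tensors SA EA evA leA SB EB evB leB =
     {ptensor EA EB evA evB a b | a b. a \<in> pure_states leA SA \<and> b \<in> pure_states leB SB}"

definition pure_above :: "'sa set \<Rightarrow> 'ea set \<Rightarrow> ('ea \<Rightarrow> 'sa \<Rightarrow> B3) \<Rightarrow> ('sa \<Rightarrow> 'sa \<Rightarrow> bool) \<Rightarrow>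
    'sb set \<Rightarrow> 'eb set \<Rightarrow> ('eb \<Rightarrow> 'sb \<Rightarrow> B3) \<Rightarrow> ('sb \<Rightarrow> 'sb \<Rightarrow> bool) \<Rightarrow>
    ('ea \<times> 'eb \<Rightarrow> B3) \<Rightarrow> ('ea \<times> 'eb \<Rightarrow> B3) set" where
  "pure_above SA EA evA leA SB EB evB leB \<sigma> =
     {\<pi> \<in> pure_tensors SA EA evA leA SB EB evB leB. tle EA EB \<sigma> \<pi>}"

end

theory Submission
  imports Defs
begin

text \<open>Every state of a space with a pure description is the meet of the pure states above it,
and the product of \<open>\<B>\<close> distributes over meets. Hence every element \<open>inf F\<close> of the minimal tensor
product is the meet of the pure tensors \<open>p \<otimes> q\<close>, with \<open>p, q\<close> pure, lying above some pair of \<open>F\<close>.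
Given a family \<open>X\<close> with an upper bound, let \<open>G\<close> be the set of pure pairs whose tensor lies above
all of \<open>X\<close>; \<open>G\<close> is nonempty because of the upper bound, \<open>inf G\<close> is an upper bound of \<open>X\<close>, and any
upper bound \<open>inf F\<close> is a meet of pure tensors indexed by pairs in \<open>G\<close>, so it lies above \<open>inf G\<close>.\<close>

lemma bInf_eq_Y_iff: "Z \<noteq> {} \<Longrightarrow> bInf Z = Y \<longleftrightarrow> (\<forall>z\<in>Z. z = Y)"
  by (auto simp: bInf_def)

lemma bInf_eq_N_iff: "Z \<noteq> {} \<Longrightarrow> bInf Z = N \<longleftrightarrow> (\<forall>z\<in>Z. z = N)"
  by (auto simp: bInf_def)

lemma B3_eqI: "(p = Y \<longleftrightarrow> q = Y) \<Longrightarrow> (p = N \<longleftrightarrow> q = N) \<Longrightarrow> p = q"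
  by (cases p; cases q) auto

lemma bprod_eq_Y_iff: "bprod x y = Y \<longleftrightarrow> x = Y \<and> y = Y"
  by (cases x; cases y) auto

lemma bprod_eq_N_iff: "bprod x y = N \<longleftrightarrow> x = N \<or> y = N"
  by (cases x; cases y) auto

lemma bInf_singleton [simp]: "bInf {v} = v"
  by (cases v) (auto simp: bInf_def)

lemma ble_bInf: "z \<in> Z \<Longrightarrow> ble (bInf Z) z"
  by (auto simp: bInf_def ble_def)

lemma ble_bInfI:
  assumes "Z \<noteq> {}" and "\<And>z. z \<in> Z \<Longrightarrow> ble w z"
  shows "ble w (bInf Z)"
proof (cases "w = Bot")
  case False
  with assms have "Z = {w}" by (auto simp: ble_def)
  then show ?thesis by (simp add: ble_def)
qed (simp add: ble_def)

lemma bInf_UNION: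
  assumes "I \<noteq> {}" and "\<And>i. i \<in> I \<Longrightarrow> X i \<noteq> {}"
  shows "bInf (\<Union>i\<in>I. X i) = bInf ((\<lambda>i. bInf (X i)) ` I)"
proof -
  have "(\<Union>i\<in>I. X i) \<noteq> {}" and "(\<lambda>i. bInf (X i)) ` I \<noteq> {}"
    using assms by auto
  with assms show ?thesis
    by (intro B3_eqI) (simp_all add: bInf_eq_Y_iff bInf_eq_N_iff)
qed

lemma bInf_bprod:
  assumes A: "VA \<noteq> {}" and B: "VB \<noteq> {}"
  shows "bInf {bprod x y | x y. x \<in> VA \<and> y \<in> VB} = bprod (bInf VA) (bInf VB)"
proof (rule B3_eqI)
  let ?V = "{bprod x y | x y. x \<in> VA \<and> y \<in> VB}"
  have V: "?V \<noteq> {}" using assms by auto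
  have "(\<forall>z\<in>?V. z = Y) \<longleftrightarrow> (\<forall>x\<in>VA. \<forall>y\<in>VB. x = Y \<and> y = Y)"
    using bprod_eq_Y_iff by blast
  also have "\<dots> \<longleftrightarrow> (\<forall>x\<in>VA. x = Y) \<and> (\<forall>y\<in>VB. y = Y)"
    using assms by blast
  finally show "bInf ?V = Y \<longleftrightarrow> bprod (bInf VA) (bInf VB) = Y"
    by (simp add: bInf_eq_Y_iff[OF V] bInf_eq_Y_iff[OF A] bInf_eq_Y_iff[OF B] bprod_eq_Y_iff)
  have "(\<forall>z\<in>?V. z = N) \<longleftrightarrow> (\<forall>x\<in>VA. \<forall>y\<in>VB. x = N \<or> y = N)"
    using bprod_eq_N_iff by blast
  also have "\<dots> \<longleftrightarrow> (\<forall>x\<in>VA. x = N) \<or> (\<forall>y\<in>VB. y = N)"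
    by blast
  finally show "bInf ?V = N \<longleftrightarrow> bprod (bInf VA) (bInf VB) = N"
    by (simp add: bInf_eq_N_iff[OF V] bInf_eq_N_iff[OF A] bInf_eq_N_iff[OF B] bprod_eq_N_iff)
qed

lemma pure_states_subset: "pure_states le S \<subseteq> S"
  by (auto simp: pure_states_def cmi_elems_def)

lemma ex_pure_state_above:
  assumes chu: "SE_chu S E ev le" and pd: "pure_description S le" and a: "a \<in> S"
  obtains p where "p \<in> pure_states le S" and "le a p"
proof -
  have "{p \<in> pure_states le S. le a p} \<noteq> {}"
  proof
    \<comment> \<open>Otherwise \<open>a\<close> is the top element: maximal, hence pure, yet the infimum of the empty family.\<close>
    assume none: "{p \<in> pure_states le S. le a p} = {}"
    have "is_inf le S {p \<in> pure_states le S. le a p} a"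
      using pd a by (simp add: pure_description_def)
    then have inf_empty: "is_inf le S {} a" by (simp only: none)
    have "\<forall>s\<in>S. \<forall>t\<in>S. le s t \<longrightarrow> le t s \<longrightarrow> s = t"
      using chu unfolding SE_chu_def by (elim conjE)
    with inf_empty a have "a \<in> maximal_elems le S"
      by (auto simp: is_inf_def maximal_elems_def)
    with pd have "a \<in> cmi_elems le S" by (simp add: pure_description_def)
    with inf_empty show False by (auto simp: cmi_elems_def)
  qed
  then show ?thesis using that by blast
qed

lemma ev_eq_bInf_pure_above:
  assumes chu: "SE_chu S E ev le" and pd: "pure_description S le"
    and a: "a \<in> S" and l: "l \<in> E"
  shows "ev l a = bInf (ev l ` {p \<in> pure_states le S. le a p})"
proof -
  have "is_inf le S {p \<in> pure_states le S. le a p} a"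
    using pd a by (simp add: pure_description_def)
  moreover have "{p \<in> pure_states le S. le a p} \<noteq> {}"
    by (rule ex_pure_state_above[OF chu pd a]) auto
  moreover have "{p \<in> pure_states le S. le a p} \<subseteq> S"
    using pure_states_subset[of le S] by blast
  moreover have "\<forall>X s. X \<subseteq> S \<longrightarrow> X \<noteq> {} \<longrightarrow> is_inf le S X s \<longrightarrow> (\<forall>l\<in>E. ev l s = bInf (ev l ` X))"
    using chu unfolding SE_chu_def by (elim conjE)
  ultimately show ?thesis using l by blast
qed

lemma tle_trans: "tle EA EB f g \<Longrightarrow> tle EA EB g h \<Longrightarrow> tle EA EB f h"
  unfolding tle_def ble_def by metis

lemma ptensor_apply:
  "la \<in> EA \<Longrightarrow> lb \<in> EB \<Longrightarrow> ptensor EA EB evA evB p q (la, lb) = bprod (evA la p) (evB lb q)"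
  by (simp add: ptensor_def tinf_def)

definition pure_cover :: "('sa \<Rightarrow> 'sa \<Rightarrow> bool) \<Rightarrow> 'sa set \<Rightarrow> ('sb \<Rightarrow> 'sb \<Rightarrow> bool) \<Rightarrow> 'sb set
    \<Rightarrow> ('sa \<times> 'sb) set \<Rightarrow> ('sa \<times> 'sb) set" where
  "pure_cover leA SA leB SB F = {(p, q). p \<in> pure_states leA SA \<and> q \<in> pure_states leB SB \<and>
     (\<exists>(a, b) \<in> F. leA a p \<and> leB b q)}"

lemma pure_cover_nonempty:
  assumes "SE_chu SA EA evA leA" "pure_description SA leA"
    and "SE_chu SB EB evB leB" "pure_description SB leB"
    and "F \<subseteq> SA \<times> SB" "F \<noteq> {}"
  shows "pure_cover leA SA leB SB F \<noteq> {}"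
proof -
  obtain a b where ab: "(a, b) \<in> F" using assms(6) by auto
  with assms(5) have a: "a \<in> SA" and b: "b \<in> SB" by auto
  obtain p where "p \<in> pure_states leA SA" "leA a p"
    by (rule ex_pure_state_above[OF assms(1,2) a])
  moreover obtain q where "q \<in> pure_states leB SB" "leB b q"
    by (rule ex_pure_state_above[OF assms(3,4) b])
  ultimately show ?thesis using ab by (auto simp: pure_cover_def)
qed

lemma pure_cover_eq_UNION: "pure_cover leA SA leB SB F = (\<Union>ab\<in>F. pure_cover leA SA leB SB {ab})"
  by (auto simp: pure_cover_def)

lemma bprod_ev_eq_bInf_pure_cover:
  assumes chuA: "SE_chu SA EA evA leA" and pureA: "pure_description SA leA"
    and chuB: "SE_chu SB EB evB leB" and pureB: "pure_description SB leB"
    and a: "a \<in> SA" and b: "b \<in> SB" and la: "la \<in> EA" and lb: "lb \<in> EB"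
  shows "bprod (evA la a) (evB lb b)
    = bInf ((\<lambda>(p, q). bprod (evA la p) (evB lb q)) ` pure_cover leA SA leB SB {(a, b)})"
proof -
  let ?PA = "{p \<in> pure_states leA SA. leA a p}" and ?PB = "{q \<in> pure_states leB SB. leB b q}"
  have "?PA \<noteq> {}" by (rule ex_pure_state_above[OF chuA pureA a]) auto
  moreover have "?PB \<noteq> {}" by (rule ex_pure_state_above[OF chuB pureB b]) auto
  ultimately have "bprod (bInf (evA la ` ?PA)) (bInf (evB lb ` ?PB))
      = bInf {bprod x y | x y. x \<in> evA la ` ?PA \<and> y \<in> evB lb ` ?PB}"
    by (simp add: bInf_bprod)
  also have "{bprod x y | x y. x \<in> evA la ` ?PA \<and> y \<in> evB lb ` ?PB}
      = (\<lambda>(p, q). bprod (evA la p) (evB lb q)) ` pure_cover leA SA leB SB {(a, b)}"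
    by (auto simp: pure_cover_def)
  finally show ?thesis
    by (simp add: ev_eq_bInf_pure_above[OF chuA pureA a la, symmetric]
        ev_eq_bInf_pure_above[OF chuB pureB b lb, symmetric])
qed

lemma tinf_eq_tinf_pure_cover:
  assumes chuA: "SE_chu SA EA evA leA" and pureA: "pure_description SA leA"
    and chuB: "SE_chu SB EB evB leB" and pureB: "pure_description SB leB"
    and F: "F \<subseteq> SA \<times> SB" "F \<noteq> {}"
  shows "tinf EA EB evA evB F = tinf EA EB evA evB (pure_cover leA SA leB SB F)"
proof -
  have "tinf EA EB evA evB F (la, lb) = tinf EA EB evA evB (pure_cover leA SA leB SB F) (la, lb)"
    for la lb
  proof (cases "la \<in> EA \<and> lb \<in> EB")
    case True
    let ?v = "\<lambda>(p, q). bprod (evA la p) (evB lb q)"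
    let ?C = "\<lambda>ab. ?v ` pure_cover leA SA leB SB {ab}"
    have "?v ab = bInf (?C ab)" if "ab \<in> F" for ab
      using that F True bprod_ev_eq_bInf_pure_cover[OF chuA pureA chuB pureB] by auto
    then have "bInf (?v ` F) = bInf ((\<lambda>ab. bInf (?C ab)) ` F)"
      by (simp cong: image_cong)
    also have "\<dots> = bInf (\<Union>ab\<in>F. ?C ab)"
    proof (rule bInf_UNION[symmetric])
      show "F \<noteq> {}" by (fact F(2))
      show "?C ab \<noteq> {}" if "ab \<in> F" for ab
        using that F pure_cover_nonempty[OF chuA pureA chuB pureB, of "{ab}"] by auto
    qed
    also have "(\<Union>ab\<in>F. ?C ab) = ?v ` pure_cover leA SA leB SB F"
      by (subst pure_cover_eq_UNION) (simp add: image_UN)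
    finally show ?thesis using True by (simp add: tinf_def)
  next
    case False
    then show ?thesis by (auto simp: tinf_def)
  qed
  then show ?thesis by (simp add: fun_eq_iff)
qed

lemma tinf_tle_ptensor:
  "(p, q) \<in> G \<Longrightarrow> tle EA EB (tinf EA EB evA evB G) (ptensor EA EB evA evB p q)"
  by (auto simp: tle_def tinf_def ptensor_apply intro!: ble_bInf)

lemma tle_tinfI:
  assumes "G \<noteq> {}" and "\<And>p q. (p, q) \<in> G \<Longrightarrow> tle EA EB t (ptensor EA EB evA evB p q)"
  shows "tle EA EB t (tinf EA EB evA evB G)"
  unfolding tle_def
proof (clarify)
  fix la lb assume "la \<in> EA" "lb \<in> EB"
  with assms show "ble (t (la, lb)) (tinf EA EB evA evB G (la, lb))"
    by (fastforce simp: tinf_def tle_def ptensor_apply intro!: ble_bInfI)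
qed

lemma tinf_antimono:
  "H \<subseteq> G \<Longrightarrow> H \<noteq> {} \<Longrightarrow> tle EA EB (tinf EA EB evA evB G) (tinf EA EB evA evB H)"
  by (auto intro!: tle_tinfI tinf_tle_ptensor)

lemma tinf_tle_ptensor_pure_cover:
  assumes "SE_chu SA EA evA leA" "pure_description SA leA"
    and "SE_chu SB EB evB leB" "pure_description SB leB"
    and "F \<subseteq> SA \<times> SB" "F \<noteq> {}" and "(p, q) \<in> pure_cover leA SA leB SB F"
  shows "tle EA EB (tinf EA EB evA evB F) (ptensor EA EB evA evB p q)"
  using tinf_tle_ptensor[OF assms(7)] tinf_eq_tinf_pure_cover[OF assms(1-6)] by simp

lemma is_inf_tinf:
  assumes "G \<subseteq> SA \<times> SB" and "G \<noteq> {}"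
  shows "is_inf (tle EA EB) (min_tensor SA EA evA SB EB evB)
           ((\<lambda>(p, q). ptensor EA EB evA evB p q) ` G) (tinf EA EB evA evB G)"
  unfolding is_inf_def
proof (intro conjI ballI impI)
  show "tinf EA EB evA evB G \<in> min_tensor SA EA evA SB EB evB"
    using assms by (auto simp: min_tensor_def)
  show "tle EA EB (tinf EA EB evA evB G) x" if "x \<in> (\<lambda>(p, q). ptensor EA EB evA evB p q) ` G" for x
    using that by (auto intro: tinf_tle_ptensor)
  show "tle EA EB t (tinf EA EB evA evB G)"
    if "\<forall>x \<in> (\<lambda>(p, q). ptensor EA EB evA evB p q) ` G. tle EA EB t x" for t
    using assms(2) by (rule tle_tinfI) (use that in force)
qed

definition pure_pairs_above :: "('sa \<Rightarrow> 'sa \<Rightarrow> bool) \<Rightarrow> 'sa set \<Rightarrow> ('sb \<Rightarrow> 'sb \<Rightarrow> bool) \<Rightarrow> 'sb set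
    \<Rightarrow> 'ea set \<Rightarrow> 'eb set \<Rightarrow> ('ea \<Rightarrow> 'sa \<Rightarrow> B3) \<Rightarrow> ('eb \<Rightarrow> 'sb \<Rightarrow> B3)
    \<Rightarrow> ('ea \<times> 'eb \<Rightarrow> B3) set \<Rightarrow> ('sa \<times> 'sb) set" where
  "pure_pairs_above leA SA leB SB EA EB evA evB X = {(p, q). p \<in> pure_states leA SA \<and>
     q \<in> pure_states leB SB \<and> (\<forall>x\<in>X. tle EA EB x (ptensor EA EB evA evB p q))}"

lemma pure_pairs_above_subset: "pure_pairs_above leA SA leB SB EA EB evA evB X \<subseteq> SA \<times> SB"
  using pure_states_subset[of leA SA] pure_states_subset[of leB SB]
  by (auto simp: pure_pairs_above_def)

lemma pure_cover_subset_pure_pairs_above: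
  assumes "SE_chu SA EA evA leA" "pure_description SA leA"
    and "SE_chu SB EB evB leB" "pure_description SB leB"
    and "F \<subseteq> SA \<times> SB" "F \<noteq> {}" and "\<forall>x\<in>X. tle EA EB x (tinf EA EB evA evB F)"
  shows "pure_cover leA SA leB SB F \<subseteq> pure_pairs_above leA SA leB SB EA EB evA evB X"
  using tinf_tle_ptensor_pure_cover[OF assms(1-6)] assms(7) tle_trans
  by (fastforce simp: pure_pairs_above_def pure_cover_def)

lemma pure_pairs_above_nonempty:
  assumes chuA: "SE_chu SA EA evA leA" and pureA: "pure_description SA leA"
    and chuB: "SE_chu SB EB evB leB" and pureB: "pure_description SB leB"
    and ub: "\<exists>\<tau> \<in> min_tensor SA EA evA SB EB evB. \<forall>x\<in>X. tle EA EB x \<tau>"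
  shows "pure_pairs_above leA SA leB SB EA EB evA evB X \<noteq> {}"
proof -
  obtain F where F: "F \<subseteq> SA \<times> SB" "F \<noteq> {}"
    and bounds: "\<forall>x\<in>X. tle EA EB x (tinf EA EB evA evB F)"
    using ub by (auto simp: min_tensor_def)
  have "pure_cover leA SA leB SB F \<subseteq> pure_pairs_above leA SA leB SB EA EB evA evB X"
    by (rule pure_cover_subset_pure_pairs_above[OF chuA pureA chuB pureB F bounds])
  moreover have "pure_cover leA SA leB SB F \<noteq> {}"
    by (rule pure_cover_nonempty[OF chuA pureA chuB pureB F])
  ultimately show ?thesis by blast
qed

lemma is_sup_tinf_pure_pairs_above:
  assumes chuA: "SE_chu SA EA evA leA" and pureA: "pure_description SA leA"
    and chuB: "SE_chu SB EB evB leB" and pureB: "pure_description SB leB"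
    and ub: "\<exists>\<tau> \<in> min_tensor SA EA evA SB EB evB. \<forall>x\<in>X. tle EA EB x \<tau>"
  shows "is_sup (tle EA EB) (min_tensor SA EA evA SB EB evB) X
           (tinf EA EB evA evB (pure_pairs_above leA SA leB SB EA EB evA evB X))"
  unfolding is_sup_def
proof (intro conjI ballI impI)
  let ?G = "pure_pairs_above leA SA leB SB EA EB evA evB X"
  have G_nonempty: "?G \<noteq> {}"
    by (rule pure_pairs_above_nonempty[OF chuA pureA chuB pureB ub])
  then show "tinf EA EB evA evB ?G \<in> min_tensor SA EA evA SB EB evB"
    using pure_pairs_above_subset[of leA SA leB SB EA EB evA evB X]
    unfolding min_tensor_def by blast
  show "tle EA EB x (tinf EA EB evA evB ?G)" if "x \<in> X" for x
    using G_nonempty by (rule tle_tinfI) (use that in \<open>auto simp: pure_pairs_above_def\<close>)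
  fix t assume "t \<in> min_tensor SA EA evA SB EB evB" and bounds: "\<forall>x\<in>X. tle EA EB x t"
  then obtain F where F: "F \<subseteq> SA \<times> SB" "F \<noteq> {}" and t: "t = tinf EA EB evA evB F"
    by (auto simp: min_tensor_def)
  have "pure_cover leA SA leB SB F \<subseteq> ?G"
    using pure_cover_subset_pure_pairs_above[OF chuA pureA chuB pureB F] bounds t by blast
  then have "tle EA EB (tinf EA EB evA evB ?G) (tinf EA EB evA evB (pure_cover leA SA leB SB F))"
    using pure_cover_nonempty[OF chuA pureA chuB pureB F] by (rule tinf_antimono)
  then show "tle EA EB (tinf EA EB evA evB ?G) t"
    by (simp add: t tinf_eq_tinf_pure_cover[OF chuA pureA chuB pureB F])
qed

theorem mainTheorem14:
  fixes SA :: "'sa set" and EA :: "'ea set" and evA :: "'ea \<Rightarrow> 'sa \<Rightarrow> B3"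
    and leA :: "'sa \<Rightarrow> 'sa \<Rightarrow> bool"
    and SB :: "'sb set" and EB :: "'eb set" and evB :: "'eb \<Rightarrow> 'sb \<Rightarrow> B3"
    and leB :: "'sb \<Rightarrow> 'sb \<Rightarrow> bool"
    and \<sigma> \<sigma>' :: "'ea \<times> 'eb \<Rightarrow> B3"
  assumes chuA: "SE_chu SA EA evA leA" and pureA: "pure_description SA leA"
    and chuB: "SE_chu SB EB evB leB" and pureB: "pure_description SB leB"
    and \<sigma>_in: "\<sigma> \<in> min_tensor SA EA evA SB EB evB"
    and \<sigma>'_in: "\<sigma>' \<in> min_tensor SA EA evA SB EB evB"
    and ub: "\<exists>\<tau> \<in> min_tensor SA EA evA SB EB evB. tle EA EB \<sigma> \<tau> \<and> tle EA EB \<sigma>' \<tau>"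
  shows "\<exists>u. is_sup (tle EA EB) (min_tensor SA EA evA SB EB evB) {\<sigma>, \<sigma>'} u \<and>
             is_inf (tle EA EB) (min_tensor SA EA evA SB EB evB)
               (pure_above SA EA evA leA SB EB evB leB \<sigma> \<inter> pure_above SA EA evA leA SB EB evB leB \<sigma>') u"
proof -
  let ?G = "pure_pairs_above leA SA leB SB EA EB evA evB {\<sigma>, \<sigma>'}"
  have bounded: "\<exists>\<tau> \<in> min_tensor SA EA evA SB EB evB. \<forall>x\<in>{\<sigma>, \<sigma>'}. tle EA EB x \<tau>"
    using ub by simp
  have "is_sup (tle EA EB) (min_tensor SA EA evA SB EB evB) {\<sigma>, \<sigma>'} (tinf EA EB evA evB ?G)"
    by (rule is_sup_tinf_pure_pairs_above[OF chuA pureA chuB pureB bounded])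
  moreover have "is_inf (tle EA EB) (min_tensor SA EA evA SB EB evB)
      ((\<lambda>(p, q). ptensor EA EB evA evB p q) ` ?G) (tinf EA EB evA evB ?G)"
    by (rule is_inf_tinf[OF pure_pairs_above_subset
          pure_pairs_above_nonempty[OF chuA pureA chuB pureB bounded]])
  moreover have "pure_above SA EA evA leA SB EB evB leB \<sigma> \<inter> pure_above SA EA evA leA SB EB evB leB \<sigma>'
      = (\<lambda>(p, q). ptensor EA EB evA evB p q) ` ?G"
    unfolding pure_above_def pure_tensors_def pure_pairs_above_def by auto
  ultimately show ?thesis by auto
qed

end
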